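(* In the setting described in the context, let $\delta\in(0,\tfrac{\sqrt2}{2})$ with $\lambda_Ka_K-\lambda_1a_1\delta>0$, let $\bar\eta>0$ satisfy $g(\mathbf Q)-g(\mathbf X)\ge\bar\eta\,d_F^2(\mathbf X,\mathbf Q)$ for all $\mathbf X\in\mathrm{St}(d,K)$, set $\delta_1=\delta^2\bar\eta$, and let $\beta_3>0$ satisfy $g(\mathbf Q)-g(\mathbf X)\le\beta_3 d_F^2(\mathbf X,\mathbf Q)$ for all $\mathbf X\in\mathrm{St}(d,K)$. Let $\mathbf X^0=[\mathbf x_1^0,\dots,\mathbf x_K^0]$, where $\mathbf x_j^0$ is a unit eigenvector of $\mathbf C$ associated with its $j$-th largest eigenvalue, $j\in[K]$ (the $K$ principal eigenvectors of $\mathbf C$). If $$\|\mathbf C-\mathbb E[\mathbf C]\|^2\le\frac{\delta_1}{8\beta_3\sum_{j=1}^K 1/\min^2\{\lambda_{j-1}-\lambda_j,\lambda_j-\lambda_{j+1}\}},$$ with the conventions $\lambda_0=+\infty$ and $\lambda_{K+1}=0$, then $g(\mathbf Q)-g(\mathbf X^0)\le\delta_1$.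
   Context: $d>K\ge1$, $\mathrm{St}(d,K)=\{\mathbf X\in\mathbb R^{d\times K}:\mathbf X^\top\mathbf X=\mathbf I_K\}$, $\mathbf Q\in\mathrm{St}(d,K)$, $\lambda_1>\dots>\lambda_K>0$, $\boldsymbol\Theta=\mathrm{diag}(\sqrt{\lambda_1},\dots,\sqrt{\lambda_K})$. Integers $L\ge1$, $n_1,\dots,n_L\ge1$, $n=\sum_ln_l$; $v_1>\dots>v_L>0$; data $\mathbf y_{l,i}=\mathbf Q\boldsymbol\Theta\mathbf z_{l,i}+\boldsymbol\eta_{l,i}\in\mathbb R^d$ ($l\in[L],i\in[n_l]$) with $\mathbf z_{l,i}$ i.i.d. $\mathcal N(\mathbf0,\mathbf I_K)$ independent of $\boldsymbol\eta_{l,i}$ i.i.d. $\mathcal N(\mathbf0,v_l\mathbf I_d)$. Sample covariance $\mathbf C=\frac1n\sum_{l=1}^L\sum_{i=1}^{n_l}\mathbf y_{l,i}\mathbf y_{l,i}^\top$, with $\mathbb E[\mathbf C]=\mathbf Q\boldsymbol\Theta^2\mathbf Q^\top+\sum_{l=1}^L\frac{n_l}{n}v_l\mathbf I_d$; $\|\cdot\|$ is the operator norm. $w_{l,k}=\lambda_k/(\lambda_k+v_l)$, $a_k=\sum_lw_{l,k}\frac{n_l}{n}\frac1{v_l}$, $g(\mathbf X)=\mathrm{tr}(\mathbf X^\top\mathbf Q\boldsymbol\Theta^2\mathbf Q^\top\mathbf X\,\mathrm{diag}(a_1,\dots,a_K))$, $d_F(\mathbf X,\mathbf Q)=\min_{\mathbf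 q\in\{\pm1\}^K}\|\mathbf X-\mathbf Q\,\mathrm{diag}(\mathbf q)\|_F$. *)

theory Defs
  imports "HOL-Analysis.Analysis"
begin

(* Conventions: indices are 1-based, j,k in {1..K}, l in {1..L}, i in {1..n_l}.
   A d x K matrix X is represented by its columns X j :: real^'d, j in {1..K};
   d = CARD('d). *)

definition outer :: "real^'d \<Rightarrow> real^'d \<Rightarrow> real^'d^'d" where
  "outer x y = (\<chi> i j. x $ i * y $ j)"

definition stiefel :: "nat \<Rightarrow> (nat \<Rightarrow> real^'d) \<Rightarrow> bool" where
  "stiefel K X \<longleftrightarrow> (\<forall>i\<in>{1..K}. \<forall>j\<in>{1..K}. X i \<bullet> X j = (if i = j then 1 else 0))"

definition ntot :: "nat \<Rightarrow> (nat \<Rightarrow> nat) \<Rightarrow> nat" where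
  "ntot L nl = (\<Sum>l=1..L. nl l)"

definition wcoef :: "(nat \<Rightarrow> real) \<Rightarrow> (nat \<Rightarrow> real) \<Rightarrow> nat \<Rightarrow> nat \<Rightarrow> real" where
  "wcoef lam v l k = lam k / (lam k + v l)"

definition acoef :: "(nat \<Rightarrow> real) \<Rightarrow> (nat \<Rightarrow> real) \<Rightarrow> nat \<Rightarrow> (nat \<Rightarrow> nat) \<Rightarrow> nat \<Rightarrow> real" where
  "acoef lam v L nl k =
     (\<Sum>l=1..L. wcoef lam v l k * (real (nl l) / real (ntot L nl)) * (1 / v l))"

(* Q Theta^2 Q^T = sum_j lambda_j q_j q_j^T *)
definition signalM :: "nat \<Rightarrow> (nat \<Rightarrow> real) \<Rightarrow> (nat \<Rightarrow> real^'d) \<Rightarrow> real^'d^'d" where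
  "signalM K lam Q = (\<Sum>j=1..K. lam j *\<^sub>R outer (Q j) (Q j))"

(* g(X) = tr(X^T Q Theta^2 Q^T X diag(a_1..a_K)) *)
definition gfun :: "nat \<Rightarrow> (nat \<Rightarrow> real) \<Rightarrow> (nat \<Rightarrow> real^'d) \<Rightarrow> (nat \<Rightarrow> real)
                     \<Rightarrow> (nat \<Rightarrow> real^'d) \<Rightarrow> real" where
  "gfun K lam Q a X = (\<Sum>k=1..K. (X k \<bullet> (signalM K lam Q *v X k)) * a k)"

definition dF :: "nat \<Rightarrow> (nat \<Rightarrow> real^'d) \<Rightarrow> (nat \<Rightarrow> real^'d) \<Rightarrow> real" where
  "dF K X Q = Min ((\<lambda>s. sqrt (\<Sum>k=1..K. (norm (X k - s k *\<^sub>R Q k))\<^sup>2))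
                   ` ({1..K} \<rightarrow>\<^sub>E {-1, 1}))"

definition ydata :: "nat \<Rightarrow> (nat \<Rightarrow> real) \<Rightarrow> (nat \<Rightarrow> real^'d) \<Rightarrow> (nat \<Rightarrow> nat \<Rightarrow> nat \<Rightarrow> real)
                      \<Rightarrow> (nat \<Rightarrow> nat \<Rightarrow> real^'d) \<Rightarrow> nat \<Rightarrow> nat \<Rightarrow> real^'d" where
  "ydata K lam Q z eta l i = (\<Sum>j=1..K. (sqrt (lam j) * z l i j) *\<^sub>R Q j) + eta l i"

definition sampleC :: "nat \<Rightarrow> (nat \<Rightarrow> real) \<Rightarrow> (nat \<Rightarrow> real^'d) \<Rightarrow> nat \<Rightarrow> (nat \<Rightarrow> nat)
                       \<Rightarrow> (nat \<Rightarrow> nat \<Rightarrow> nat \<Rightarrow> real) \<Rightarrow> (nat \<Rightarrow> nat \<Rightarrow> real^'d) \<Rightarrow> real^'d^'d" where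
  "sampleC K lam Q L nl z eta =
     (1 / real (ntot L nl)) *\<^sub>R
       (\<Sum>l=1..L. \<Sum>i=1..nl l. outer (ydata K lam Q z eta l i) (ydata K lam Q z eta l i))"

definition meanC :: "nat \<Rightarrow> (nat \<Rightarrow> real) \<Rightarrow> (nat \<Rightarrow> real^'d) \<Rightarrow> nat \<Rightarrow> (nat \<Rightarrow> nat)
                     \<Rightarrow> (nat \<Rightarrow> real) \<Rightarrow> real^'d^'d" where
  "meanC K lam Q L nl v =
     signalM K lam Q + (\<Sum>l=1..L. real (nl l) / real (ntot L nl) * v l) *\<^sub>R mat 1"

(* min{lambda_{j-1}-lambda_j, lambda_j-lambda_{j+1}} with lambda_0 = +inf, lambda_{K+1} = 0 *)
definition gapK :: "(nat \<Rightarrow> real) \<Rightarrow> nat \<Rightarrow> nat \<Rightarrow> real" where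
  "gapK lam K j =
     (let lam' = (\<lambda>i. if i = K + 1 then 0 else lam i) in
      if j = 1 then lam' 1 - lam' 2
      else min (lam (j - 1) - lam j) (lam' j - lam' (j + 1)))"

end

theory Submission
  imports Defs
begin

(* E[C] is the spiked operator sum_k lambda_k q_k q_k^T + c I, and C differs from it by an operator
   of norm t = ||C - E[C]||.  By the Courant-Fischer principle the j-th eigenvalue of C lies within t
   of lambda_j + c; the unit eigenvector x_j then has residual at most t for the spiked operator, whose
   other eigenvalues (lambda_k + c for k <> j, and c on the complement of the q_k) are separated from
   lambda_j + c by the gap g_j.  This Davis-Kahan type argument gives 1 - <x_j, q_j>^2 <= 4 t^2 / g_j^2,
   and choosing the sign of each q_j to match x_j yields d_F(X^0, Q)^2 <= 8 t^2 sum_j 1 / g_j^2.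
   The quadratic upper bound g(Q) - g(X) <= beta_3 d_F(X, Q)^2 and the assumed bound on t^2 finish. *)

definition orthonormal_on :: "'i set \<Rightarrow> ('i \<Rightarrow> 'a::real_inner) \<Rightarrow> bool" where
  "orthonormal_on I w \<longleftrightarrow> (\<forall>i\<in>I. \<forall>k\<in>I. w i \<bullet> w k = (if i = k then 1 else 0))"

lemma orthonormal_on_subset: "orthonormal_on I w \<Longrightarrow> J \<subseteq> I \<Longrightarrow> orthonormal_on J w"
  unfolding orthonormal_on_def by blast

lemma orthonormal_on_norm: "orthonormal_on I w \<Longrightarrow> i \<in> I \<Longrightarrow> norm (w i) = 1"
  unfolding orthonormal_on_def by (simp add: norm_eq_sqrt_inner)

lemma orthonormal_on_inj: "orthonormal_on I w \<Longrightarrow> inj_on w I"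
  unfolding orthonormal_on_def inj_on_def by (metis one_neq_zero)

lemma inner_sum_orthonormal_on:
  assumes "finite I" "orthonormal_on I w" "k \<in> I"
  shows "w k \<bullet> (\<Sum>i\<in>I. a i *\<^sub>R w i) = a k"
proof -
  have "w k \<bullet> (\<Sum>i\<in>I. a i *\<^sub>R w i) = (\<Sum>i\<in>I. a i * (w k \<bullet> w i))"
    by (simp add: inner_sum_right)
  also have "\<dots> = (\<Sum>i\<in>I. if i = k then a k else 0)"
    using assms by (intro sum.cong) (auto simp: orthonormal_on_def)
  finally show ?thesis
    using assms by simp
qed

lemma inner_sums_orthonormal_on:
  assumes "finite I" "orthonormal_on I w"
  shows "(\<Sum>i\<in>I. a i *\<^sub>R w i) \<bullet> (\<Sum>i\<in>I. b i *\<^sub>R w i) = (\<Sum>i\<in>I. a i * b i)"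
  using assms by (simp add: inner_sum_left inner_sum_orthonormal_on)

lemma span_orthonormal_on_expansion:
  assumes "finite I" "orthonormal_on I w" "u \<in> span (w ` I)"
  shows "u = (\<Sum>i\<in>I. (u \<bullet> w i) *\<^sub>R w i)"
proof -
  define r where "r = u - (\<Sum>i\<in>I. (u \<bullet> w i) *\<^sub>R w i)"
  have "r \<in> span (w ` I)"
    unfolding r_def by (intro span_diff[OF assms(3)] span_sum span_scale span_base imageI)
  moreover have "orthogonal r (w k)" if "k \<in> I" for k
  proof -
    have "w k \<bullet> r = w k \<bullet> u - u \<bullet> w k"
      using inner_sum_orthonormal_on[OF assms(1,2) that, of "\<lambda>i. u \<bullet> w i"]
      by (simp add: r_def inner_diff_right)
    then show ?thesis
      by (simp add: orthogonal_def inner_commute)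
  qed
  ultimately have "orthogonal r r"
    by (auto intro: orthogonal_to_span)
  then show ?thesis
    unfolding orthogonal_self r_def by simp
qed

lemma bessel_inequality:
  assumes "finite I" "orthonormal_on I w"
  shows "(\<Sum>i\<in>I. (u \<bullet> w i)\<^sup>2) \<le> u \<bullet> u"
proof -
  define p where "p = (\<Sum>i\<in>I. (u \<bullet> w i) *\<^sub>R w i)"
  have "p \<bullet> p = (\<Sum>i\<in>I. (u \<bullet> w i)\<^sup>2)"
    using inner_sums_orthonormal_on[OF assms] by (simp add: p_def power2_eq_square)
  moreover have "u \<bullet> p = (\<Sum>i\<in>I. (u \<bullet> w i)\<^sup>2)"
    by (simp add: p_def inner_sum_right power2_eq_square)
  moreover have "0 \<le> (u - p) \<bullet> (u - p)"
    by simp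
  ultimately show ?thesis
    by (simp add: inner_diff inner_commute)
qed

lemma dim_span_orthonormal_on:
  fixes w :: "'i \<Rightarrow> 'a::euclidean_space"
  assumes "finite I" "orthonormal_on I w"
  shows "dim (span (w ` I)) = card I"
proof -
  have "pairwise orthogonal (w ` I)"
    using assms by (auto simp: pairwise_def orthogonal_def orthonormal_on_def)
  moreover have "0 \<notin> w ` I"
    using orthonormal_on_norm[OF assms(2)] by force
  ultimately have "dim (span (w ` I)) = card (w ` I)"
    by (intro dim_span_eq_card_independent pairwise_orthogonal_independent)
  also have "\<dots> = card I"
    by (rule card_image[OF orthonormal_on_inj[OF assms(2)]])
  finally show ?thesis .
qed

lemma dim_orthogonal_complement_orthonormal_on:
  fixes w :: "'i \<Rightarrow> 'a::euclidean_space"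
  assumes "finite I" "orthonormal_on I w"
  shows "dim {y. \<forall>i\<in>I. w i \<bullet> y = 0} = DIM('a) - card I"
proof -
  have "orthogonal x y" if y: "\<forall>i\<in>I. w i \<bullet> y = 0" and x: "x \<in> span (w ` I)" for x y
  proof -
    have "orthogonal y z" if "z \<in> w ` I" for z
      using that y by (auto simp: orthogonal_def inner_commute[of y])
    then have "orthogonal y x"
      by (rule orthogonal_to_span[OF x])
    then show ?thesis
      by (simp add: orthogonal_commute)
  qed
  then have "{y. \<forall>i\<in>I. w i \<bullet> y = 0} = {y \<in> UNIV. \<forall>x \<in> span (w ` I). orthogonal x y}"
    by (auto simp: orthogonal_def span_base)
  moreover have "dim {y \<in> UNIV. \<forall>x \<in> span (w ` I). orthogonal x y} + dim (span (w ` I)) = DIM('a)"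
    using dim_subspace_orthogonal_to_vectors[of "span (w ` I)" UNIV] by simp
  ultimately show ?thesis
    using dim_span_orthonormal_on[OF assms] by simp
qed

lemma subspaces_inter_nonzero:
  fixes S T :: "'a::euclidean_space set"
  assumes "subspace S" "subspace T" "DIM('a) < dim S + dim T"
  obtains u where "u \<in> S" "u \<in> T" "u \<noteq> 0"
proof -
  have "dim {x + y |x y. x \<in> S \<and> y \<in> T} \<le> DIM('a)"
    by (rule dim_subset_UNIV)
  then have "dim (S \<inter> T) \<noteq> 0"
    using dim_sums_Int[OF assms(1,2)] assms(3) by linarith
  then obtain u where "u \<in> S \<inter> T" "u \<noteq> 0"
    by auto
  then show ?thesis
    using that by blast
qed

lemma antimono_on_atLeastAtMostI:
  fixes f :: "nat \<Rightarrow> 'a::order"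
  assumes "\<And>i. a \<le> i \<Longrightarrow> i < b \<Longrightarrow> f (Suc i) \<le> f i"
  shows "antimono_on {a..b} f"
proof (rule monotone_onI)
  fix i k
  assume "i \<in> {a..b}" "k \<in> {a..b}" "i \<le> k"
  have "k \<le> b \<longrightarrow> f k \<le> f i"
    using \<open>i \<le> k\<close>
  proof (induction k rule: dec_induct)
    case (step n)
    then show ?case
      using assms[of n] \<open>i \<in> {a..b}\<close> order_trans by force
  qed simp
  then show "f k \<le> f i"
    using \<open>k \<in> {a..b}\<close> by simp
qed

lemma strict_antimono_on_atLeastAtMostI:
  fixes f :: "nat \<Rightarrow> 'a::order"
  assumes "\<And>i. a \<le> i \<Longrightarrow> i < b \<Longrightarrow> f (Suc i) < f i"
  shows "strict_antimono_on {a..b} f"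
proof (rule monotone_onI)
  fix i k
  assume "i \<in> {a..b}" "k \<in> {a..b}" "i < k"
  have "k \<le> b \<longrightarrow> f k < f i"
    using Suc_leI[OF \<open>i < k\<close>]
  proof (induction k rule: dec_induct)
    case base
    then show ?case
      using assms[of i] \<open>i \<in> {a..b}\<close> by simp
  next
    case (step n)
    then show ?case
      using assms[of n] \<open>i \<in> {a..b}\<close> less_trans by force
  qed
  then show "f k < f i"
    using \<open>k \<in> {a..b}\<close> by simp
qed

locale sorted_eigenbasis =
  fixes f :: "'a::euclidean_space \<Rightarrow> 'a" and x :: "nat \<Rightarrow> 'a" and mu :: "nat \<Rightarrow> real"
  assumes linear_f: "linear f"
    and orthonormal_x: "orthonormal_on {1..DIM('a)} x"
    and eigenvector: "\<And>i. i \<in> {1..DIM('a)} \<Longrightarrow> f (x i) = mu i *\<^sub>R x i"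
    and eigenvalues_sorted: "antimono_on {1..DIM('a)} mu"
begin

lemma dim_span_eigenvectors:
  assumes "J \<subseteq> {1..DIM('a)}"
  shows "dim (span (x ` J)) = card J"
  using assms finite_subset orthonormal_on_subset[OF orthonormal_x]
  by (intro dim_span_orthonormal_on) auto

lemma rayleigh_span_eigenvectors:
  assumes J: "J \<subseteq> {1..DIM('a)}" and u: "u \<in> span (x ` J)"
  shows "u \<bullet> f u = (\<Sum>i\<in>J. mu i * (u \<bullet> x i)\<^sup>2)" "u \<bullet> u = (\<Sum>i\<in>J. (u \<bullet> x i)\<^sup>2)"
proof -
  have fin: "finite J" and oJ: "orthonormal_on J x"
    using J finite_subset orthonormal_on_subset[OF orthonormal_x] by auto
  define a where "a i = u \<bullet> x i" for i
  have u_eq: "u = (\<Sum>i\<in>J. a i *\<^sub>R x i)"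
    unfolding a_def by (rule span_orthonormal_on_expansion[OF fin oJ u])
  have "f u = (\<Sum>i\<in>J. (mu i * a i) *\<^sub>R x i)"
    using J by (subst u_eq) (auto simp: real_vector.linear_sum[OF linear_f]
        linear_cmul[OF linear_f] eigenvector intro!: sum.cong)
  then have "u \<bullet> f u = (\<Sum>i\<in>J. a i * (mu i * a i))"
    by (subst (1) u_eq) (simp add: inner_sums_orthonormal_on[OF fin oJ])
  then show "u \<bullet> f u = (\<Sum>i\<in>J. mu i * (u \<bullet> x i)\<^sup>2)"
    by (simp add: a_def power2_eq_square mult.left_commute)
  have "u \<bullet> u = (\<Sum>i\<in>J. a i * a i)"
    by (subst (1 2) u_eq) (rule inner_sums_orthonormal_on[OF fin oJ])
  then show "u \<bullet> u = (\<Sum>i\<in>J. (u \<bullet> x i)\<^sup>2)"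
    by (simp add: a_def power2_eq_square)
qed

lemma eigenvalue_ge_if_subspace:
  assumes S: "subspace S" and j: "1 \<le> j" "j \<le> dim S"
    and lower: "\<And>u. u \<in> S \<Longrightarrow> m * (u \<bullet> u) \<le> u \<bullet> f u"
  shows "m \<le> mu j"
proof -
  let ?J = "{j..DIM('a)}"
  have jD: "j \<le> DIM('a)"
    using j dim_subset_UNIV[of S] by simp
  have J: "?J \<subseteq> {1..DIM('a)}"
    using j by auto
  have "DIM('a) < dim S + dim (span (x ` ?J))"
    using dim_span_eigenvectors[OF J] j by simp
  then obtain u where u: "u \<in> S" "u \<in> span (x ` ?J)" "u \<noteq> 0"
    by (rule subspaces_inter_nonzero[OF S subspace_span])
  have "u \<bullet> f u = (\<Sum>i\<in>?J. mu i * (u \<bullet> x i)\<^sup>2)"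
    by (rule rayleigh_span_eigenvectors(1)[OF J u(2)])
  also have "\<dots> \<le> (\<Sum>i\<in>?J. mu j * (u \<bullet> x i)\<^sup>2)"
    using J jD by (intro sum_mono mult_right_mono monotone_onD[OF eigenvalues_sorted]) auto
  also have "\<dots> = mu j * (u \<bullet> u)"
    by (simp add: rayleigh_span_eigenvectors(2)[OF J u(2)] sum_distrib_left)
  finally have "m * (u \<bullet> u) \<le> mu j * (u \<bullet> u)"
    using lower[OF u(1)] by linarith
  then show ?thesis
    using u(3) by simp
qed

lemma eigenvalue_le_if_subspace:
  assumes T: "subspace T" and j: "1 \<le> j" "j \<le> DIM('a)" "DIM('a) < dim T + j"
    and upper: "\<And>u. u \<in> T \<Longrightarrow> u \<bullet> f u \<le> m * (u \<bullet> u)"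
  shows "mu j \<le> m"
proof -
  let ?J = "{1..j}"
  have J: "?J \<subseteq> {1..DIM('a)}"
    using j by auto
  have "DIM('a) < dim T + dim (span (x ` ?J))"
    using dim_span_eigenvectors[OF J] j by simp
  then obtain u where u: "u \<in> T" "u \<in> span (x ` ?J)" "u \<noteq> 0"
    by (rule subspaces_inter_nonzero[OF T subspace_span])
  have "mu j * (u \<bullet> u) = (\<Sum>i\<in>?J. mu j * (u \<bullet> x i)\<^sup>2)"
    by (simp add: rayleigh_span_eigenvectors(2)[OF J u(2)] sum_distrib_left)
  also have "\<dots> \<le> (\<Sum>i\<in>?J. mu i * (u \<bullet> x i)\<^sup>2)"
    using J j by (intro sum_mono mult_right_mono monotone_onD[OF eigenvalues_sorted]) auto
  also have "\<dots> = u \<bullet> f u"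
    by (rule rayleigh_span_eigenvectors(1)[OF J u(2), symmetric])
  finally have "mu j * (u \<bullet> u) \<le> m * (u \<bullet> u)"
    using upper[OF u(1)] by linarith
  then show ?thesis
    using u(3) by simp
qed

end

definition spiked_op :: "nat \<Rightarrow> (nat \<Rightarrow> real) \<Rightarrow> (nat \<Rightarrow> 'a::real_inner) \<Rightarrow> real \<Rightarrow> 'a \<Rightarrow> 'a" where
  "spiked_op K lam q c u = (\<Sum>k=1..K. (lam k * (q k \<bullet> u)) *\<^sub>R q k) + c *\<^sub>R u"

lemma inner_spiked_op:
  "u \<bullet> spiked_op K lam q c u = (\<Sum>k=1..K. lam k * (q k \<bullet> u)\<^sup>2) + c * (u \<bullet> u)"
  by (simp add: spiked_op_def inner_add_right inner_sum_right power2_eq_square inner_commute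
      mult.assoc)

lemma spiked_op_rayleigh_ge:
  assumes q: "orthonormal_on {1..K} q" and lam: "antimono_on {1..K} lam" and j: "j \<in> {1..K}"
    and u: "u \<in> span (q ` {1..j})"
  shows "(lam j + c) * (u \<bullet> u) \<le> u \<bullet> spiked_op K lam q c u"
proof -
  have qj: "orthonormal_on {1..j} q"
    using orthonormal_on_subset[OF q] j by auto
  have "u \<bullet> u = (\<Sum>k=1..j. (u \<bullet> q k) * (u \<bullet> q k))"
    by (subst (1 2) span_orthonormal_on_expansion[OF finite_atLeastAtMost qj u])
      (rule inner_sums_orthonormal_on[OF finite_atLeastAtMost qj])
  then have "(\<Sum>k=1..j. (q k \<bullet> u)\<^sup>2) = u \<bullet> u"
    by (simp add: power2_eq_square inner_commute)
  then have "(lam j + c) * (u \<bullet> u) = lam j * (\<Sum>k=1..j. (q k \<bullet> u)\<^sup>2) + c * (u \<bullet> u)"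
    by (simp add: distrib_right)
  also have "\<dots> \<le> (\<Sum>k=1..j. lam k * (q k \<bullet> u)\<^sup>2) + c * (u \<bullet> u)"
    unfolding sum_distrib_left using j
    by (intro add_right_mono sum_mono mult_right_mono monotone_onD[OF lam]) auto
  also have "(\<Sum>k=1..j. lam k * (q k \<bullet> u)\<^sup>2) = (\<Sum>k=1..K. lam k * (q k \<bullet> u)\<^sup>2)"
  proof (intro sum.mono_neutral_left ballI)
    show "lam k * (q k \<bullet> u)\<^sup>2 = 0" if "k \<in> {1..K} - {1..j}" for k
    proof -
      have "orthogonal (q k) (q i)" if "i \<in> {1..j}" for i
        using q \<open>k \<in> {1..K} - {1..j}\<close> that j by (auto simp: orthogonal_def orthonormal_on_def)
      then have "orthogonal (q k) u"
        by (auto intro: orthogonal_to_span[OF u])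
      then show ?thesis
        by (simp add: orthogonal_def)
    qed
  qed (use j in auto)
  finally show ?thesis
    by (simp add: inner_spiked_op)
qed

lemma spiked_op_rayleigh_le:
  assumes q: "orthonormal_on {1..K} q" and lam: "antimono_on {1..K} lam" and j: "j \<in> {1..K}"
    and lam_j: "0 \<le> lam j" and u: "\<forall>i\<in>{1..<j}. q i \<bullet> u = 0"
  shows "u \<bullet> spiked_op K lam q c u \<le> (lam j + c) * (u \<bullet> u)"
proof -
  have "lam k * (q k \<bullet> u)\<^sup>2 \<le> lam j * (q k \<bullet> u)\<^sup>2" if "k \<in> {1..K}" for k
  proof (cases "k < j")
    case False
    then show ?thesis
      using that j by (intro mult_right_mono monotone_onD[OF lam]) auto
  next
    case True
    then show ?thesis
      using u that by simp
  qed
  then have "(\<Sum>k=1..K. lam k * (q k \<bullet> u)\<^sup>2) \<le> lam j * (\<Sum>k=1..K. (q k \<bullet> u)\<^sup>2)"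
    unfolding sum_distrib_left by (rule sum_mono)
  also have "\<dots> \<le> lam j * (u \<bullet> u)"
    using bessel_inequality[OF _ q, of u] lam_j by (intro mult_left_mono) (simp_all add: inner_commute)
  finally show ?thesis
    by (simp add: inner_spiked_op distrib_right)
qed

context sorted_eigenbasis
begin

lemma eigenvalue_spiked_op_perturbation:
  assumes q: "orthonormal_on {1..K} q" and K: "K \<le> DIM('a)" and lam: "antimono_on {1..K} lam"
    and j: "j \<in> {1..K}" and lam_j: "0 \<le> lam j"
    and perturbation: "\<And>u. \<bar>u \<bullet> f u - u \<bullet> spiked_op K lam q c u\<bar> \<le> t * (u \<bullet> u)"
  shows "\<bar>mu j - (lam j + c)\<bar> \<le> t"
proof -
  have "lam j + c - t \<le> mu j"
  proof (rule eigenvalue_ge_if_subspace[OF subspace_span])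
    have "dim (span (q ` {1..j})) = card {1..j}"
      using j by (intro dim_span_orthonormal_on orthonormal_on_subset[OF q]) auto
    then show "j \<le> dim (span (q ` {1..j}))"
      by simp
    show "(lam j + c - t) * (u \<bullet> u) \<le> u \<bullet> f u" if "u \<in> span (q ` {1..j})" for u
      using spiked_op_rayleigh_ge[OF q lam j that, of c] abs_le_D2[OF perturbation[of u]]
      by (simp add: left_diff_distrib)
  qed (use j in auto)
  moreover have "mu j \<le> lam j + c + t"
  proof (rule eigenvalue_le_if_subspace)
    let ?T = "{y. \<forall>i\<in>{1..<j}. q i \<bullet> y = 0}"
    show "subspace ?T"
      by (auto simp: subspace_def inner_add_right)
    have "dim ?T = DIM('a) - card {1..<j}"
      using j by (intro dim_orthogonal_complement_orthonormal_on orthonormal_on_subset[OF q]) auto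
    then show "DIM('a) < dim ?T + j"
      using j K by simp
    show "u \<bullet> f u \<le> (lam j + c + t) * (u \<bullet> u)" if "u \<in> ?T" for u
      using spiked_op_rayleigh_le[OF q lam j lam_j, of u c] that abs_le_D1[OF perturbation[of u]]
      by (simp add: distrib_right)
  qed (use j K in auto)
  ultimately show ?thesis
    by linarith
qed

end

lemma norm_spiked_op_residual:
  fixes m c :: real
  assumes q: "orthonormal_on {1..K} q"
  defines "e \<equiv> m - c"
  shows "(norm (spiked_op K lam q c x - m *\<^sub>R x))\<^sup>2
    = (\<Sum>k=1..K. (lam k - e)\<^sup>2 * (q k \<bullet> x)\<^sup>2) + e\<^sup>2 * (x \<bullet> x - (\<Sum>k=1..K. (q k \<bullet> x)\<^sup>2))"
proof -
  define V where "V = (\<Sum>k=1..K. (lam k * (q k \<bullet> x)) *\<^sub>R q k)"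
  have "spiked_op K lam q c x - m *\<^sub>R x = V - e *\<^sub>R x"
    by (simp add: spiked_op_def V_def e_def algebra_simps)
  then have "(norm (spiked_op K lam q c x - m *\<^sub>R x))\<^sup>2 = (V - e *\<^sub>R x) \<bullet> (V - e *\<^sub>R x)"
    by (simp only: power2_norm_eq_inner)
  also have "\<dots> = V \<bullet> V - 2 * e * (V \<bullet> x) + e\<^sup>2 * (x \<bullet> x)"
    by (simp add: inner_diff inner_commute power2_eq_square algebra_simps)
  also have "V \<bullet> V = (\<Sum>k=1..K. (lam k)\<^sup>2 * (q k \<bullet> x)\<^sup>2)"
    unfolding V_def inner_sums_orthonormal_on[OF finite_atLeastAtMost q]
    by (simp add: power2_eq_square mult_ac)
  also have "V \<bullet> x = (\<Sum>k=1..K. lam k * (q k \<bullet> x)\<^sup>2)"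
    by (simp add: V_def inner_sum_left power2_eq_square mult.assoc)
  also have "(\<Sum>k=1..K. (lam k)\<^sup>2 * (q k \<bullet> x)\<^sup>2) - 2 * e * (\<Sum>k=1..K. lam k * (q k \<bullet> x)\<^sup>2)
      = (\<Sum>k=1..K. (lam k - e)\<^sup>2 * (q k \<bullet> x)\<^sup>2) - e\<^sup>2 * (\<Sum>k=1..K. (q k \<bullet> x)\<^sup>2)"
    by (simp add: sum_distrib_left sum_subtractf[symmetric] power2_eq_square algebra_simps)
  finally show ?thesis
    by (simp add: algebra_simps)
qed

lemma norm_spiked_op_residual_ge:
  assumes q: "orthonormal_on {1..K} q" and j: "j \<in> {1..K}" and x: "x \<bullet> x = 1" and h: "0 \<le> h"
    and separated: "\<And>k. k \<in> {1..K} \<Longrightarrow> k \<noteq> j \<Longrightarrow> h \<le> \<bar>lam k - (m - c)\<bar>"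
    and separated_zero: "h \<le> \<bar>m - c\<bar>"
  shows "h\<^sup>2 * (1 - (q j \<bullet> x)\<^sup>2) \<le> (norm (spiked_op K lam q c x - m *\<^sub>R x))\<^sup>2"
proof -
  define e where "e = m - c"
  let ?c = "\<lambda>k. (q k \<bullet> x)\<^sup>2"
  have sq_le: "h\<^sup>2 \<le> a\<^sup>2" if "h \<le> \<bar>a\<bar>" for a
    using power_mono[OF that h, of 2] by simp
  have sum_split: "(\<Sum>k=1..K. f k) = f j + (\<Sum>k\<in>{1..K}-{j}. f k)" for f :: "nat \<Rightarrow> real"
    using j by (simp add: sum.remove)
  have "h\<^sup>2 * (\<Sum>k\<in>{1..K}-{j}. ?c k) \<le> (\<Sum>k\<in>{1..K}-{j}. (lam k - e)\<^sup>2 * ?c k)"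
    unfolding sum_distrib_left using separated
    by (intro sum_mono mult_right_mono sq_le) (auto simp: e_def)
  also have "\<dots> \<le> (\<Sum>k=1..K. (lam k - e)\<^sup>2 * ?c k)"
    unfolding sum_split[of "\<lambda>k. (lam k - e)\<^sup>2 * ?c k"] by simp
  finally have "h\<^sup>2 * (1 - ?c j) \<le> (\<Sum>k=1..K. (lam k - e)\<^sup>2 * ?c k) + h\<^sup>2 * (1 - (\<Sum>k=1..K. ?c k))"
    unfolding sum_split[of ?c] by (simp add: algebra_simps)
  also have "\<dots> \<le> (\<Sum>k=1..K. (lam k - e)\<^sup>2 * ?c k) + e\<^sup>2 * (1 - (\<Sum>k=1..K. ?c k))"
    using sq_le[OF separated_zero] bessel_inequality[OF _ q, of x] x
    by (intro add_left_mono mult_right_mono) (simp_all add: e_def inner_commute)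
  also have "\<dots> = (norm (spiked_op K lam q c x - m *\<^sub>R x))\<^sup>2"
    using norm_spiked_op_residual[OF q] x by (simp add: e_def)
  finally show ?thesis .
qed

lemma spiked_op_eigenvector_alignment:
  assumes q: "orthonormal_on {1..K} q" and j: "j \<in> {1..K}" and x: "x \<bullet> x = 1"
    and residual: "norm (spiked_op K lam q c x - m *\<^sub>R x) \<le> t"
    and eigenvalue: "\<bar>m - (lam j + c)\<bar> \<le> t"
    and g: "0 < g" and gap: "\<And>k. k \<in> {1..K} \<Longrightarrow> k \<noteq> j \<Longrightarrow> g \<le> \<bar>lam k - lam j\<bar>"
    and gap_zero: "g \<le> \<bar>lam j\<bar>"
  shows "1 - (q j \<bullet> x)\<^sup>2 \<le> 4 * t\<^sup>2 / g\<^sup>2"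
proof (cases "g \<le> 2 * t")
  case True
  then have "g\<^sup>2 \<le> (2 * t)\<^sup>2"
    using g by (intro power_mono) auto
  then have "1 \<le> 4 * t\<^sup>2 / g\<^sup>2"
    using g by (simp add: field_simps power_mult_distrib)
  then show ?thesis
    using zero_le_power2[of "q j \<bullet> x"] by linarith
next
  case False
  have "0 \<le> t"
    using residual norm_ge_zero order_trans by blast
  then have h: "g / 2 < g - t" "0 \<le> g - t"
    using False by auto
  have "norm x = 1"
    using x by (simp add: norm_eq_1)
  then have "(q j \<bullet> x)\<^sup>2 \<le> 1"
    using Cauchy_Schwarz_ineq2[of "q j" x] orthonormal_on_norm[OF q j] by (simp add: abs_square_le_1)
  then have "(g / 2)\<^sup>2 * (1 - (q j \<bullet> x)\<^sup>2) \<le> (g - t)\<^sup>2 * (1 - (q j \<bullet> x)\<^sup>2)"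
    using h g by (intro mult_right_mono power_mono) auto
  also have "\<dots> \<le> (norm (spiked_op K lam q c x - m *\<^sub>R x))\<^sup>2"
  proof (rule norm_spiked_op_residual_ge[OF q j x h(2)])
    show "g - t \<le> \<bar>lam k - (m - c)\<bar>" if "k \<in> {1..K}" "k \<noteq> j" for k
      using gap[OF that] eigenvalue by arith
    show "g - t \<le> \<bar>m - c\<bar>"
      using gap_zero eigenvalue by arith
  qed
  also have "\<dots> \<le> t\<^sup>2"
    using residual by (simp add: power_mono)
  finally have "g\<^sup>2 * (1 - (q j \<bullet> x)\<^sup>2) \<le> 4 * t\<^sup>2"
    by (simp add: power_divide)
  then show ?thesis
    using g by (simp add: field_simps)
qed

lemma gapK_bounds:
  fixes lam :: "nat \<Rightarrow> real"
  assumes lam: "strict_antimono_on {1..K} lam" and pos: "0 < lam K" and j: "j \<in> {1..K}"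
  shows "0 < gapK lam K j" "gapK lam K j \<le> lam j"
    "\<And>k. k \<in> {1..K} \<Longrightarrow> k \<noteq> j \<Longrightarrow> gapK lam K j \<le> \<bar>lam k - lam j\<bar>"
proof -
  have less: "lam b < lam a" if "a \<in> {1..K}" "b \<in> {1..K}" "a < b" for a b
    using monotone_onD[OF lam that] by simp
  have le: "lam b \<le> lam a" if "a \<in> {1..K}" "b \<in> {1..K}" "a \<le> b" for a b
    using less[OF that(1,2)] that(3) by (cases "a = b") auto
  define lam_next where "lam_next = (if j = K then 0 else lam (Suc j))"
  have gapK_eq: "gapK lam K j
      = (if j = 1 then lam j - lam_next else min (lam (j - 1) - lam j) (lam j - lam_next))"
    using j by (auto simp: gapK_def Let_def lam_next_def numeral_2_eq_2)
  have next_less: "lam_next < lam j" and next_nonneg: "0 \<le> lam_next"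
    using j pos less[of j "Suc j"] le[of "Suc j" K] by (auto simp: lam_next_def)
  have prev_less: "lam j < lam (j - 1)" if "j \<noteq> 1"
    using j that by (intro less) auto
  show "0 < gapK lam K j"
    using next_less prev_less by (auto simp: gapK_eq)
  have upper: "gapK lam K j \<le> lam j - lam_next"
    by (simp add: gapK_eq)
  then show "gapK lam K j \<le> lam j"
    using next_nonneg by linarith
  fix k
  assume k: "k \<in> {1..K}" "k \<noteq> j"
  show "gapK lam K j \<le> \<bar>lam k - lam j\<bar>"
  proof (cases "k < j")
    case True
    then have "j \<noteq> 1"
      using k by auto
    then have "gapK lam K j \<le> lam (j - 1) - lam j"
      by (simp add: gapK_eq)
    moreover have "lam (j - 1) \<le> lam k" "lam j < lam k"
      using True j k le[of k "j - 1"] less[of k j] by auto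
    ultimately show ?thesis
      by linarith
  next
    case False
    then have "lam_next = lam (Suc j)" "lam k \<le> lam (Suc j)" "lam k < lam j"
      using j k le[of "Suc j" k] less[of j k] by (auto simp: lam_next_def)
    with upper show ?thesis
      by linarith
  qed
qed

lemma sum_inverse_gapK_sq_pos:
  fixes lam :: "nat \<Rightarrow> real"
  assumes "strict_antimono_on {1..K} lam" "0 < lam K" "1 \<le> K"
  shows "0 < (\<Sum>j=1..K. 1 / (gapK lam K j)\<^sup>2)"
proof (rule sum_pos)
  show "0 < 1 / (gapK lam K j)\<^sup>2" if "j \<in> {1..K}" for j
    using gapK_bounds(1)[OF assms(1,2) that] by simp
qed (use assms(3) in auto)

lemma dF_sq_le:
  assumes "s \<in> {1..K} \<rightarrow>\<^sub>E {-1, 1}"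
  shows "(dF K X Q)\<^sup>2 \<le> (\<Sum>k=1..K. (norm (X k - s k *\<^sub>R Q k))\<^sup>2)"
proof -
  define F where "F = (\<lambda>s. sqrt (\<Sum>k=1..K. (norm (X k - s k *\<^sub>R Q k))\<^sup>2))"
  have fin: "finite (F ` ({1..K} \<rightarrow>\<^sub>E {-1, 1}))"
    by (intro finite_imageI finite_PiE) auto
  have dF_eq: "dF K X Q = Min (F ` ({1..K} \<rightarrow>\<^sub>E {-1, 1}))"
    unfolding dF_def F_def by (rule refl)
  have "dF K X Q \<le> F s"
    unfolding dF_eq using assms by (intro Min_le[OF fin]) auto
  moreover have "dF K X Q \<in> F ` ({1..K} \<rightarrow>\<^sub>E {-1, 1})"
    unfolding dF_eq using assms by (intro Min_in[OF fin]) auto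
  then have "0 \<le> dF K X Q"
    by (auto simp: F_def intro!: sum_nonneg)
  ultimately have "(dF K X Q)\<^sup>2 \<le> (F s)\<^sup>2"
    by (simp add: power_mono)
  then show ?thesis
    by (simp add: F_def sum_nonneg)
qed

lemma norm_diff_sign_aligned_sq:
  fixes x q :: "'a::real_inner"
  assumes "norm x = 1" "norm q = 1"
  shows "(norm (x - (if 0 \<le> x \<bullet> q then 1 else -1) *\<^sub>R q))\<^sup>2 \<le> 2 * (1 - (x \<bullet> q)\<^sup>2)"
proof -
  have "\<bar>x \<bullet> q\<bar> \<le> 1"
    using Cauchy_Schwarz_ineq2[of x q] assms by simp
  then have "(x \<bullet> q)\<^sup>2 \<le> \<bar>x \<bullet> q\<bar>"
    by (metis abs_ge_zero mult_left_le power2_abs power2_eq_square)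
  moreover have "(norm (x - (if 0 \<le> x \<bullet> q then 1 else -1) *\<^sub>R q))\<^sup>2 = 2 - 2 * \<bar>x \<bullet> q\<bar>"
    using assms by (simp add: power2_norm_eq_inner inner_diff inner_commute[of q x] norm_eq_1)
  ultimately show ?thesis
    by simp
qed

lemma dF_sq_le_alignment:
  assumes "\<And>k. k \<in> {1..K} \<Longrightarrow> norm (X k) = 1" "\<And>k. k \<in> {1..K} \<Longrightarrow> norm (Q k) = 1"
  shows "(dF K X Q)\<^sup>2 \<le> 2 * (\<Sum>k=1..K. 1 - (X k \<bullet> Q k)\<^sup>2)"
proof -
  define s where "s = restrict (\<lambda>k. if 0 \<le> X k \<bullet> Q k then 1 else - 1 :: real) {1..K}"
  have "s \<in> {1..K} \<rightarrow>\<^sub>E {-1, 1}"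
    by (auto simp: s_def)
  then have "(dF K X Q)\<^sup>2 \<le> (\<Sum>k=1..K. (norm (X k - s k *\<^sub>R Q k))\<^sup>2)"
    by (rule dF_sq_le)
  also have "\<dots> \<le> (\<Sum>k=1..K. 2 * (1 - (X k \<bullet> Q k)\<^sup>2))"
  proof (rule sum_mono)
    fix k
    assume k: "k \<in> {1..K}"
    then have "s k = (if 0 \<le> X k \<bullet> Q k then 1 else -1)"
      by (simp add: s_def)
    then show "(norm (X k - s k *\<^sub>R Q k))\<^sup>2 \<le> 2 * (1 - (X k \<bullet> Q k)\<^sup>2)"
      using norm_diff_sign_aligned_sq[OF assms[OF k]] by simp
  qed
  finally show ?thesis
    by (simp add: sum_distrib_left)
qed

context sorted_eigenbasis
begin

lemma principal_eigenvector_alignment: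
  assumes q: "orthonormal_on {1..K} q" and K: "K \<le> DIM('a)"
    and lam: "strict_antimono_on {1..K} lam" and pos: "0 < lam K"
    and perturbation: "\<And>u. norm (f u - spiked_op K lam q c u) \<le> t * norm u"
    and j: "j \<in> {1..K}"
  shows "1 - (x j \<bullet> q j)\<^sup>2 \<le> 4 * t\<^sup>2 / (gapK lam K j)\<^sup>2"
proof -
  note gap = gapK_bounds[OF lam pos j]
  have x_j: "norm (x j) = 1" "x j \<bullet> x j = 1"
    using j K orthonormal_x by (auto simp: orthonormal_on_def norm_eq_sqrt_inner)
  have "\<bar>u \<bullet> f u - u \<bullet> spiked_op K lam q c u\<bar> \<le> t * (u \<bullet> u)" for u
  proof -
    have "\<bar>u \<bullet> (f u - spiked_op K lam q c u)\<bar> \<le> norm u * (t * norm u)"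
      using Cauchy_Schwarz_ineq2 perturbation mult_left_mono norm_ge_zero order_trans by metis
    then show ?thesis
      by (simp add: inner_diff_right power2_norm_eq_inner[symmetric] power2_eq_square mult_ac)
  qed
  then have "\<bar>mu j - (lam j + c)\<bar> \<le> t"
    using gap(1,2) q K j strict_antimono_iff_antimono[THEN iffD1, OF lam]
    by (intro eigenvalue_spiked_op_perturbation) auto
  moreover have "norm (spiked_op K lam q c (x j) - mu j *\<^sub>R x j) \<le> t"
    using perturbation[of "x j"] eigenvector[of j] j K x_j by (simp add: norm_minus_commute)
  ultimately have "1 - (q j \<bullet> x j)\<^sup>2 \<le> 4 * t\<^sup>2 / (gapK lam K j)\<^sup>2"
    using gap by (intro spiked_op_eigenvector_alignment[OF q j x_j(2)]) auto
  then show ?thesis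
    by (simp add: inner_commute)
qed

end

lemma dF_sq_le_principal_eigenvectors:
  fixes f :: "real^'d \<Rightarrow> real^'d" and x X q :: "nat \<Rightarrow> real^'d"
  assumes eigenbasis: "sorted_eigenbasis f x mu"
    and q: "orthonormal_on {1..K} q" and K: "K \<le> CARD('d)"
    and lam: "strict_antimono_on {1..K} lam" and pos: "0 < lam K"
    and perturbation: "\<And>u. norm (f u - spiked_op K lam q c u) \<le> t * norm u"
    and X: "\<And>j. j \<in> {1..K} \<Longrightarrow> X j = x j"
  shows "(dF K X q)\<^sup>2 \<le> 8 * t\<^sup>2 * (\<Sum>j=1..K. 1 / (gapK lam K j)\<^sup>2)"
proof -
  interpret sorted_eigenbasis f x mu
    by (fact eigenbasis)
  have "norm (X j) = 1" if "j \<in> {1..K}" for j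
    using that X K orthonormal_on_norm[OF orthonormal_x] by simp
  then have "(dF K X q)\<^sup>2 \<le> 2 * (\<Sum>j=1..K. 1 - (X j \<bullet> q j)\<^sup>2)"
    using orthonormal_on_norm[OF q] by (rule dF_sq_le_alignment)
  also have "\<dots> \<le> 2 * (\<Sum>j=1..K. 4 * t\<^sup>2 / (gapK lam K j)\<^sup>2)"
    using principal_eigenvector_alignment[OF q _ lam pos perturbation] K X
    by (intro mult_left_mono sum_mono) auto
  also have "\<dots> = 8 * t\<^sup>2 * (\<Sum>j=1..K. 1 / (gapK lam K j)\<^sup>2)"
    by (simp add: sum_distrib_left)
  finally show ?thesis .
qed

lemma outer_mult_vec: "outer a b *v u = (b \<bullet> u) *\<^sub>R a"
  by (simp add: outer_def vec_eq_iff matrix_vector_mult_def inner_vec_def sum_distrib_left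
      mult.commute mult.left_commute)

lemma meanC_mult_eq_spiked_op:
  "meanC K lam Q L nl v *v u = spiked_op K lam Q (\<Sum>l=1..L. real (nl l) / real (ntot L nl) * v l) u"
proof -
  have "(\<Sum>k=1..K. lam k *\<^sub>R outer (Q k) (Q k)) *v u = (\<Sum>k=1..K. (lam k * (Q k \<bullet> u)) *\<^sub>R Q k)"
    by (induction K) (simp_all add: matrix_vector_mult_add_rdistrib outer_mult_vec
        scaleR_matrix_vector_assoc[symmetric])
  then show ?thesis
    by (simp add: meanC_def signalM_def spiked_op_def matrix_vector_mult_add_rdistrib
        scaleR_matrix_vector_assoc[symmetric])
qed

lemma sorted_eigenbasis_mult_vec:
  fixes A :: "real^'n^'n"
  assumes "\<forall>i\<in>{1..CARD('n)}. \<forall>j\<in>{1..CARD('n)}. x i \<bullet> x j = (if i = j then 1 else 0)"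
    and "\<forall>i\<in>{1..CARD('n)}. A *v x i = mu i *\<^sub>R x i"
    and "\<forall>i\<in>{1..<CARD('n)}. mu (Suc i) \<le> mu i"
  shows "sorted_eigenbasis ((*v) A) x mu"
  using assms
  by (intro sorted_eigenbasis.intro) (auto simp: orthonormal_on_def intro!: antimono_on_atLeastAtMostI)

lemma norm_diff_spiked_op_le_onorm:
  "norm (A *v u - spiked_op K lam Q (\<Sum>l=1..L. real (nl l) / real (ntot L nl) * v l) u)
    \<le> onorm (\<lambda>u. (A - meanC K lam Q L nl v) *v u) * norm u"
proof -
  have "A *v u - spiked_op K lam Q (\<Sum>l=1..L. real (nl l) / real (ntot L nl) * v l) u
      = (A - meanC K lam Q L nl v) *v u"
    by (simp add: meanC_mult_eq_spiked_op matrix_vector_mult_diff_rdistrib)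
  then show ?thesis
    by (simp only: onorm[OF matrix_vector_mul_bounded_linear])
qed

theorem lemma9:
  fixes Q X0 :: "nat \<Rightarrow> real^'d"
    and K L :: nat
    and lam v :: "nat \<Rightarrow> real"
    and nl :: "nat \<Rightarrow> nat"
    and z :: "nat \<Rightarrow> nat \<Rightarrow> nat \<Rightarrow> real"
    and eta :: "nat \<Rightarrow> nat \<Rightarrow> real^'d"
    and \<delta> \<eta>bar \<beta>3 :: real
  assumes K: "1 \<le> K" "K < CARD('d)"
    and Q: "stiefel K Q"
    and lam_dec: "\<forall>j\<in>{1..<K}. lam j > lam (Suc j)"
    and lam_pos: "lam K > 0"
    and L: "1 \<le> L"
    and nl: "\<forall>l\<in>{1..L}. 1 \<le> nl l"
    and v_dec: "\<forall>l\<in>{1..<L}. v l > v (Suc l)"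
    and v_pos: "v L > 0"
    and delta: "0 < \<delta>" "\<delta> < sqrt 2 / 2"
    and delta2: "lam K * acoef lam v L nl K - lam 1 * acoef lam v L nl 1 * \<delta> > 0"
    and etabar: "\<eta>bar > 0"
      "\<forall>X. stiefel K X \<longrightarrow>
          gfun K lam Q (acoef lam v L nl) Q - gfun K lam Q (acoef lam v L nl) X
            \<ge> \<eta>bar * (dF K X Q)\<^sup>2"
    and beta3: "\<beta>3 > 0"
      "\<forall>X. stiefel K X \<longrightarrow>
          gfun K lam Q (acoef lam v L nl) Q - gfun K lam Q (acoef lam v L nl) X
            \<le> \<beta>3 * (dF K X Q)\<^sup>2"
    and X0: "\<exists>x :: nat \<Rightarrow> real^'d. \<exists>\<mu> :: nat \<Rightarrow> real.
          (\<forall>i\<in>{1..CARD('d)}. \<forall>j\<in>{1..CARD('d)}. x i \<bullet> x j = (if i = j then 1 else 0))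
        \<and> (\<forall>i\<in>{1..CARD('d)}. sampleC K lam Q L nl z eta *v x i = \<mu> i *\<^sub>R x i)
        \<and> (\<forall>i\<in>{1..<CARD('d)}. \<mu> i \<ge> \<mu> (Suc i))
        \<and> (\<forall>j\<in>{1..K}. X0 j = x j)"
    and bound: "(onorm (\<lambda>u. (sampleC K lam Q L nl z eta - meanC K lam Q L nl v) *v u))\<^sup>2
        \<le> (\<delta>\<^sup>2 * \<eta>bar) / (8 * \<beta>3 * (\<Sum>j=1..K. 1 / (gapK lam K j)\<^sup>2))"
  shows "gfun K lam Q (acoef lam v L nl) Q - gfun K lam Q (acoef lam v L nl) X0 \<le> \<delta>\<^sup>2 * \<eta>bar"
proof -
  let ?C = "sampleC K lam Q L nl z eta" and ?g = "gfun K lam Q (acoef lam v L nl)"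
  define t where "t = onorm (\<lambda>u. (?C - meanC K lam Q L nl v) *v u)"
  define S where "S = (\<Sum>j=1..K. 1 / (gapK lam K j)\<^sup>2)"
  obtain x :: "nat \<Rightarrow> real^'d" and mu where
    x: "\<forall>i\<in>{1..CARD('d)}. \<forall>j\<in>{1..CARD('d)}. x i \<bullet> x j = (if i = j then 1 else 0)"
    and eigen: "\<forall>i\<in>{1..CARD('d)}. ?C *v x i = mu i *\<^sub>R x i"
    and sorted: "\<forall>i\<in>{1..<CARD('d)}. mu i \<ge> mu (Suc i)"
    and X0_eq: "\<forall>j\<in>{1..K}. X0 j = x j"
    using X0 by blast
  have eigenbasis: "sorted_eigenbasis ((*v) ?C) x mu"
    using sorted by (intro sorted_eigenbasis_mult_vec[OF x eigen]) simp
  have lam_strict: "strict_antimono_on {1..K} lam"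
    using lam_dec by (intro strict_antimono_on_atLeastAtMostI) auto
  have dF_bound: "(dF K X0 Q)\<^sup>2 \<le> 8 * t\<^sup>2 * S"
    unfolding S_def t_def using Q K X0_eq
    by (intro dF_sq_le_principal_eigenvectors[OF eigenbasis _ _ lam_strict lam_pos
          norm_diff_spiked_op_le_onorm]) (auto simp: stiefel_def orthonormal_on_def)
  have "stiefel K X0"
    using x X0_eq K by (simp add: stiefel_def)
  then have "?g Q - ?g X0 \<le> \<beta>3 * (dF K X0 Q)\<^sup>2"
    using beta3(2) by blast
  also have "\<dots> \<le> \<beta>3 * (8 * t\<^sup>2 * S)"
    using dF_bound beta3(1) by (simp add: mult_left_mono)
  also have "\<dots> \<le> \<delta>\<^sup>2 * \<eta>bar"
    using bound beta3(1) sum_inverse_gapK_sq_pos[OF lam_strict lam_pos K(1)]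
    by (simp add: t_def S_def pos_le_divide_eq mult_ac)
  finally show ?thesis .
qed

end
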